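(* Let $1\le i<j\le n$ and let $R$ be a positive integer prime to $p$. If $v_{K_R}(s_{R,i,j})<-q\mu_{i,j}+pR$, then $p\nmid v_{K_R}(s_{R,i,j})$.
   Context: Let $p$ be a prime and $K$ a complete discrete valuation field of characteristic $p$ with algebraically closed residue field $k$, normalized valuation $v_K$. Fix $t\in K$ with $v_K(t)=-1$; every $x\in K$ is uniquely $\sum_{l\ge v_K(x)}x_lt^{-l}$ with $x_l\in k$, and $\mathrm{coef}_{K,l}(x)=x_l$. $UT_n(F)$ (resp. $NT_n(F)$) denotes upper triangular $n\times n$ matrices over $F$ with diagonal entries $1$ (resp. $0$); $X^{(p^m)}$ raises every entry of $X$ to the $p^m$-th power. For $X=(x_{i,j})\in UT_n(K)$ put $v_K(X)=\min_{i<j}v_K(x_{i,j})/(j-i)$. Let $n\ge2$ and $L/K$ a totally wildly ramified finite Galois extension with $\mathrm{Gal}(L/K)\cong UT_n(\mathbb F_p)$. Fix $A=(a_{i,j})\in UT_n(K)$ with $\mathrm{coef}_{K,l}(a_{i,j})=0$ for all $i<j$ and $l\in p\mathbb Z\cup\mathbb Z_{\ge0}$, such that $X^{(p)}A=X$ has a solution $\Theta\in UT_n(L)$ whose entries generate $L$ over $K$. Put $m_A=-v_K(A)$, fix an integer $N>\log_p\big(n(p^{n(n-1)/2}+1)m_A+p\big)+\frac{n(n-1)}2$ and $q=p^N$. For a positive integer $R$ prime to $p$ let $K_R=K(T)$ with $T^q+T^{q-1}=t^R$, normalized valuation $v_{K_R}$. Let $t_R\in\overline K$ be the $qR$-th root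 of $t^R(1+T^{-1})^{-1}$ congruent to $t^{1/q}$ modulo $t^{1/q}\mathfrak m_{\overline K}$ (so $t_R\in K_R$, $v_{K_R}(t_R)=-1$). Let $\iota_R:K\to K_R$ be the ring isomorphism $\sum_lx_lt^{-l}\mapsto\sum_lx_l^{1/q}t_R^{-l}$, applied entrywise. Put $A_R=\iota_R(A)$, $W_{R,0}=I$, $W_{R,e}=A_R^{(p^{e-1})}W_{R,e-1}$ ($1\le e\le N$), and $S_R=(W_{R,N}^{(p)})^{-1}AW_{R,N-1}^{(p)}-I=(s_{R,i,j})\in NT_n(K_R)$. For $1\le i<j\le n$ let $m_{i,j}=-v_K(a_{i,j})$ ($=-\infty$ if $a_{i,j}=0$). A partition for $(i,j)$ is a sequence of integers $i=\lambda_0<\lambda_1<\dots<\lambda_s=j$, of length $|\lambda|=s$; $m_\lambda=\sum_{u=0}^{|\lambda|-1}m_{\lambda_u,\lambda_{u+1}}$ and $\mu_{i,j}=\max m_\lambda$ over all partitions for $(i,j)$. *)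

theory Defs
  imports "HOL-Computational_Algebra.Computational_Algebra" "HOL-Library.Extended_Real"
begin

text \<open>Model: K = k((u)) with u = 1/t, i.e. x = sum x_l t^(-l) = sum x_l u^l, so the
 coefficient coef_{K,l}(x) is fls_nth x l and v_K(x) is fls_subdegree x.
 Matrices are functions nat => nat => 'a, only indices 1..n are used.\<close>

type_synonym 'a mx = "nat \<Rightarrow> nat \<Rightarrow> 'a"

definition vfl :: "'a::zero fls \<Rightarrow> ereal" where
  "vfl x = (if x = 0 then \<infinity> else ereal (of_int (fls_subdegree x)))"

definition mmul :: "nat \<Rightarrow> 'a::comm_semiring_1 mx \<Rightarrow> 'a mx \<Rightarrow> 'a mx" where
  "mmul n X Y = (\<lambda>i j. \<Sum>l\<in>{1..n}. X i l * Y l j)"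

definition idm :: "'a::{zero,one} mx" where
  "idm = (\<lambda>i j. if i = j then 1 else 0)"

definition msub :: "'a::ab_group_add mx \<Rightarrow> 'a mx \<Rightarrow> 'a mx" where
  "msub X Y = (\<lambda>i j. X i j - Y i j)"

definition frobm :: "nat \<Rightarrow> 'a::monoid_mult mx \<Rightarrow> 'a mx" where
  "frobm e X = (\<lambda>i j. X i j ^ e)"

definition is_UT :: "nat \<Rightarrow> 'a::{zero,one} mx \<Rightarrow> bool" where
  "is_UT n X \<longleftrightarrow> (\<forall>i\<in>{1..n}. \<forall>j\<in>{1..n}. (i = j \<longrightarrow> X i j = 1) \<and> (j < i \<longrightarrow> X i j = 0))"

definition minv :: "nat \<Rightarrow> 'a::comm_semiring_1 mx \<Rightarrow> 'a mx" where
  "minv n X = (THE Y. (\<forall>i j. (i \<notin> {1..n} \<or> j \<notin> {1..n}) \<longrightarrow> Y i j = 0) \<and>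
                     (\<forall>i\<in>{1..n}. \<forall>j\<in>{1..n}. mmul n X Y i j = idm i j))"

definition mA :: "nat \<Rightarrow> 'a::zero fls mx \<Rightarrow> real" where
  "mA n A = - Min {real_of_int (fls_subdegree (A i j)) / real (j - i) | i j.
                   1 \<le> i \<and> i < j \<and> j \<le> n \<and> A i j \<noteq> 0}"

definition mij :: "'a::zero fls mx \<Rightarrow> nat \<Rightarrow> nat \<Rightarrow> ereal" where
  "mij A i j = - vfl (A i j)"

definition partitions :: "nat \<Rightarrow> nat \<Rightarrow> nat list set" where
  "partitions i j = {lam. lam \<noteq> [] \<and> hd lam = i \<and> last lam = j \<and> sorted_wrt (<) lam}"

definition mlam :: "'a::zero fls mx \<Rightarrow> nat list \<Rightarrow> ereal" where
  "mlam A lam = (\<Sum>u<length lam - 1. mij A (lam ! u) (lam ! (u + 1)))"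

definition mu :: "'a::zero fls mx \<Rightarrow> nat \<Rightarrow> nat \<Rightarrow> ereal" where
  "mu A i j = Max (mlam A ` partitions i j)"

text \<open>K_R is modelled as k((u_R)) with u_R = 1/t_R. Since t_R^(qR) = T^q we get T = t_R^R,
 and t = t_R^q (1 + t_R^(-R))^(1/R), i.e. u = u_R^q (1 + u_R^R)^(-1/R).
 hR is (1 + u^R)^(-1/R), the unique power series with constant term 1 and hR^R (1+u^R) = 1.\<close>
definition hR :: "nat \<Rightarrow> 'a::field fps" where
  "hR R = (THE h. fps_nth h 0 = 1 \<and> h ^ R * (1 + fps_X ^ R) = 1)"

definition gR :: "nat \<Rightarrow> nat \<Rightarrow> 'a::field fps" where
  "gR q R = fps_X ^ q * hR R"

definition embR :: "nat \<Rightarrow> nat \<Rightarrow> 'a::field fls \<Rightarrow> 'a fls" where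
  "embR q R x = fls_compose_fps x (gR q R)"

definition iotaR :: "nat \<Rightarrow> 'a::field fls \<Rightarrow> 'a fls" where
  "iotaR q x = Abs_fls (\<lambda>l. THE y. y ^ q = fls_nth x l)"

definition WR :: "nat \<Rightarrow> nat \<Rightarrow> nat \<Rightarrow> 'a::field fls mx \<Rightarrow> nat \<Rightarrow> 'a fls mx" where
  "WR p n q A e = rec_nat idm
     (\<lambda>e' W. mmul n (frobm (p ^ e') (\<lambda>i j. iotaR q (A i j))) W) e"

definition SR :: "nat \<Rightarrow> nat \<Rightarrow> nat \<Rightarrow> nat \<Rightarrow> nat \<Rightarrow> 'a::field fls mx \<Rightarrow> 'a fls mx" where
  "SR p n N R q A = msub
     (mmul n (minv n (frobm p (WR p n q A N)))
        (mmul n (\<lambda>i j. embR q R (A i j)) (frobm p (WR p n q A (N - 1))))) idm"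

text \<open>Galois group of L over K, where K is embedded in L via phi\<close>
definition galK :: "('k \<Rightarrow> 'l::field) \<Rightarrow> ('l \<Rightarrow> 'l) set" where
  "galK phi = {\<sigma>. bij \<sigma> \<and> (\<forall>x y. \<sigma> (x + y) = \<sigma> x + \<sigma> y) \<and> (\<forall>x y. \<sigma> (x * y) = \<sigma> x * \<sigma> y)
                 \<and> (\<forall>c. \<sigma> (phi c) = phi c)}"

definition is_field_hom :: "('a::field \<Rightarrow> 'b::field) \<Rightarrow> bool" where
  "is_field_hom f \<longleftrightarrow> f 1 = 1 \<and> (\<forall>x y. f (x + y) = f x + f y) \<and> (\<forall>x y. f (x * y) = f x * f y)"

definition is_subfield :: "'a::field set \<Rightarrow> bool" where
  "is_subfield F \<longleftrightarrow> 0 \<in> F \<and> 1 \<in> F \<and> (\<forall>x\<in>F. \<forall>y\<in>F. x + y \<in> F \<and> x * y \<in> F \<and> - x \<in> F)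
      \<and> (\<forall>x\<in>F. inverse x \<in> F)"

text \<open>UT_n(F_p): F_p represented by {0..<p}, matrices zero outside indices 1..n\<close>
definition UTFp :: "nat \<Rightarrow> nat \<Rightarrow> nat mx set" where
  "UTFp n p = {M. (\<forall>i j. M i j < p) \<and> (\<forall>i j. (i \<notin> {1..n} \<or> j \<notin> {1..n}) \<longrightarrow> M i j = 0)
     \<and> (\<forall>i\<in>{1..n}. M i i = 1) \<and> (\<forall>i\<in>{1..n}. \<forall>j\<in>{1..n}. j < i \<longrightarrow> M i j = 0)}"

definition UTFp_mult :: "nat \<Rightarrow> nat \<Rightarrow> nat mx \<Rightarrow> nat mx \<Rightarrow> nat mx" where
  "UTFp_mult n p M M' = (\<lambda>i j. if i \<in> {1..n} \<and> j \<in> {1..n}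
      then (\<Sum>l\<in>{1..n}. M i l * M' l j) mod p else 0)"

text \<open>L/K is a finite Galois extension with group isomorphic to UT_n(F_p)
 (Artin: Gal finite with fixed field K means L/K finite Galois with that group)\<close>
definition galois_UT :: "nat \<Rightarrow> nat \<Rightarrow> ('k \<Rightarrow> 'l::field) \<Rightarrow> bool" where
  "galois_UT n p phi \<longleftrightarrow>
     {x. \<forall>\<sigma>\<in>galK phi. \<sigma> x = x} = range phi \<and>
     (\<exists>\<psi>. bij_betw \<psi> (galK phi) (UTFp n p) \<and>
        (\<forall>\<sigma>\<in>galK phi. \<forall>\<tau>\<in>galK phi. \<psi> (\<sigma> \<circ> \<tau>) = UTFp_mult n p (\<psi> \<sigma>) (\<psi> \<tau>)))"

end

theory Submission
  imports Defs
begin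

text \<open>Put M = W_N^(p), V = W_{N-1}^(p) and C = A_R^(p^N). Then M = C V, so
 S_R = M^(-1) (A - C) V. The entries of M^(-1) and V are series in u_R^p, and their (k,l) entries
 vanish below -q mu_{k,l}. In K_R we have u = u_R^q h with h = (1 + u_R^R)^(-1/R), hence an entry
 a - iota_R(a)^q of A - C equals sum_m a_m u_R^(qm) (h^m - 1). As h^m - 1 only involves positive
 multiples of R and p does not divide R, its terms at exponents divisible by p start at
 q v_K(a) + pR. Superadditivity of mu combines the three bounds: S_{R,i,j} has no terms at
 exponents divisible by p below -q mu_{i,j} + pR, so a valuation below that bound is prime to p.\<close>

section \<open>Roots of Frobenius and the map iota_R\<close>

lemma CHAR_eq_prime:
  assumes "prime p" and "of_nat p = (0::'k::field)"
  shows "CHAR('k) = p"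
proof -
  have "CHAR('k) dvd p" using assms(2) by (simp add: of_nat_eq_0_iff_char_dvd)
  moreover have "CHAR('k) \<noteq> 1"
    by (metis of_nat_1 of_nat_CHAR one_neq_zero)
  ultimately show ?thesis using assms(1) prime_nat_iff by auto
qed

lemma CHAR_power_root_unique:
  fixes y z :: "'k::field"
  assumes "prime CHAR('k)" and "y ^ (CHAR('k) ^ e) = z ^ (CHAR('k) ^ e)"
  shows "y = z"
proof -
  have "((y - z) + z) ^ (CHAR('k) ^ e) = (y - z) ^ (CHAR('k) ^ e) + z ^ (CHAR('k) ^ e)"
    by (rule freshmans_dream') (use assms in auto)
  then have "(y - z) ^ (CHAR('k) ^ e) = 0" using assms by simp
  then show ?thesis by simp
qed

lemma alg_closed_root_exists:
  fixes x :: "'k::field"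
  assumes alg: "\<forall>f::'k poly. degree f > 0 \<longrightarrow> (\<exists>x. poly f x = 0)" and q: "q > 0"
  shows "\<exists>y. y ^ q = x"
proof -
  let ?f = "[:-x:] + monom 1 q"
  have "degree ?f = q"
    using q by (subst degree_add_eq_right) (auto simp: degree_monom_eq)
  then have "0 < degree ?f" using q by simp
  then obtain y where "poly ?f y = 0" using alg by blast
  then have "y ^ q = x" by (simp add: poly_monom)
  then show ?thesis by blast
qed

lemma the_CHAR_power_root_eq:
  assumes "prime CHAR('k::field)" and "y ^ (CHAR('k) ^ e) = x"
  shows "(THE y::'k. y ^ (CHAR('k) ^ e) = x) = y"
  by (rule the_equality) (use assms CHAR_power_root_unique in auto)

lemma the_CHAR_power_root:
  fixes x :: "'k::field"
  assumes alg: "\<forall>f::'k poly. degree f > 0 \<longrightarrow> (\<exists>x. poly f x = 0)"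
    and pc: "prime CHAR('k)"
  shows "(THE y. y ^ (CHAR('k) ^ e) = x) ^ (CHAR('k) ^ e) = x"
proof -
  have "CHAR('k) ^ e > 0" using pc prime_gt_0_nat by simp
  then obtain y where y: "y ^ (CHAR('k) ^ e) = x" using alg_closed_root_exists[OF alg] by blast
  then have "(THE y. y ^ (CHAR('k) ^ e) = x) = y" by (rule the_CHAR_power_root_eq[OF pc])
  with y show ?thesis by simp
qed

lemma the_CHAR_power_root_0:
  "prime CHAR('k::field) \<Longrightarrow> (THE y::'k. y ^ (CHAR('k) ^ e) = 0) = 0"
  by (rule the_CHAR_power_root_eq) (auto simp: prime_gt_0_nat)

lemma the_CHAR_power_root_1:
  "prime CHAR('k::field) \<Longrightarrow> (THE y::'k. y ^ (CHAR('k) ^ e) = 1) = 1"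
  by (rule the_CHAR_power_root_eq) auto

lemma iotaR_nth:
  fixes x :: "'k::field fls"
  assumes pc: "prime CHAR('k)"
  shows "fls_nth (iotaR (CHAR('k) ^ e) x) l = (THE y. y ^ (CHAR('k) ^ e) = fls_nth x l)"
proof -
  let ?g = "\<lambda>l. (THE y. y ^ (CHAR('k) ^ e) = fls_nth x l)"
  have "\<forall>n>nat (- fls_subdegree x). ?g (- int n) = 0"
    using the_CHAR_power_root_0[OF pc] by auto
  then have "\<forall>\<^sub>\<infinity> n::nat. ?g (- int n) = 0" unfolding MOST_nat by blast
  then show ?thesis unfolding iotaR_def using nth_Abs_fls by simp
qed

lemma iotaR_0: "prime CHAR('k::field) \<Longrightarrow> iotaR (CHAR('k) ^ e) (0::'k fls) = 0"
  by (rule fls_eqI) (simp add: iotaR_nth the_CHAR_power_root_0 del: power_eq_0_iff)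

lemma iotaR_1: "prime CHAR('k::field) \<Longrightarrow> iotaR (CHAR('k) ^ e) (1::'k fls) = 1"
  by (rule fls_eqI)
    (simp add: iotaR_nth the_CHAR_power_root_0 the_CHAR_power_root_1 del: power_eq_0_iff)

lemma iotaR_nth_eq_0_iff:
  fixes x :: "'k::field fls"
  assumes pc: "prime CHAR('k)"
    and alg: "\<forall>f::'k poly. degree f > 0 \<longrightarrow> (\<exists>x. poly f x = 0)"
  shows "fls_nth (iotaR (CHAR('k) ^ e) x) l = 0 \<longleftrightarrow> fls_nth x l = 0"
proof
  assume "fls_nth (iotaR (CHAR('k) ^ e) x) l = 0"
  then have "0 ^ (CHAR('k) ^ e) = fls_nth x l"
    using the_CHAR_power_root[OF alg pc, of e "fls_nth x l"] by (simp only: iotaR_nth[OF pc])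
  moreover have "(0::'k) ^ (CHAR('k) ^ e) = 0" using pc prime_gt_0_nat by simp
  ultimately show "fls_nth x l = 0" by simp
next
  assume "fls_nth x l = 0"
  then show "fls_nth (iotaR (CHAR('k) ^ e) x) l = 0"
    by (simp only: iotaR_nth[OF pc] the_CHAR_power_root_0[OF pc])
qed

lemma fls_subdegree_iotaR:
  assumes pc: "prime CHAR('k::field)"
    and alg: "\<forall>f::'k poly. degree f > 0 \<longrightarrow> (\<exists>x. poly f x = 0)" and x: "x \<noteq> (0::'k fls)"
  shows "fls_subdegree (iotaR (CHAR('k) ^ e) x) = fls_subdegree x"
  by (rule fls_subdegree_eqI) (use x iotaR_nth_eq_0_iff[OF pc alg] in auto)

lemma fls_eq_sum_monomials:
  fixes f :: "'a::comm_ring_1 fls"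
  assumes "finite S" "\<forall>m. m \<notin> S \<longrightarrow> fls_nth f m = 0"
  shows "f = (\<Sum>m\<in>S. fls_const (fls_nth f m) * fls_X_intpow m)"
proof (rule fls_eqI)
  fix k
  have "fls_nth (\<Sum>m\<in>S. fls_const (fls_nth f m) * fls_X_intpow m) k
      = (\<Sum>m\<in>S. if k = m then fls_nth f m else 0)"
    by (simp add: fls_nth_sum if_distrib cong: if_cong)
  also have "\<dots> = fls_nth f k"
    using assms by (auto simp: sum.delta')
  finally show "fls_nth f k = fls_nth (\<Sum>m\<in>S. fls_const (fls_nth f m) * fls_X_intpow m) k" by simp
qed

lemma fls_power_CHAR_power_eq_sum:
  fixes f :: "'k::field fls"
  assumes pc: "prime CHAR('k)" and "finite S" "\<forall>m. m \<notin> S \<longrightarrow> fls_nth f m = 0"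
  shows "f ^ (CHAR('k) ^ e) =
    (\<Sum>m\<in>S. fls_const (fls_nth f m ^ (CHAR('k) ^ e)) * fls_X_intpow (int (CHAR('k) ^ e) * m))"
proof -
  have pc': "prime CHAR('k fls)" using pc by simp
  have "f ^ (CHAR('k) ^ e) = (\<Sum>m\<in>S. fls_const (fls_nth f m) * fls_X_intpow m) ^ (CHAR('k fls) ^ e)"
    using fls_eq_sum_monomials[OF assms(2,3)] by simp
  also have "\<dots> = (\<Sum>m\<in>S. (fls_const (fls_nth f m) * fls_X_intpow m) ^ (CHAR('k fls) ^ e))"
    by (rule freshmans_dream_sum'[OF pc']) simp
  also have "\<dots> = (\<Sum>m\<in>S. fls_const (fls_nth f m ^ (CHAR('k) ^ e)) * fls_X_intpow (int (CHAR('k) ^ e) * m))"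
    by (simp add: power_mult_distrib fls_const_power fls_X_intpow_power)
  finally show ?thesis .
qed

lemma iotaR_power_eq_sum:
  fixes a :: "'k::field fls"
  assumes pc: "prime CHAR('k)"
    and alg: "\<forall>f::'k poly. degree f > 0 \<longrightarrow> (\<exists>x. poly f x = 0)"
    and "finite S" and supp: "\<forall>m. m \<notin> S \<longrightarrow> fls_nth a m = 0"
  shows "iotaR (CHAR('k) ^ e) a ^ (CHAR('k) ^ e) =
    (\<Sum>m\<in>S. fls_const (fls_nth a m) * fls_X_intpow (int (CHAR('k) ^ e) * m))"
proof -
  have "\<forall>m. m \<notin> S \<longrightarrow> fls_nth (iotaR (CHAR('k) ^ e) a) m = 0"
    using supp iotaR_nth_eq_0_iff[OF pc alg] by blast
  from fls_power_CHAR_power_eq_sum[OF pc \<open>finite S\<close> this] show ?thesis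
    by (simp add: iotaR_nth[OF pc] the_CHAR_power_root[OF alg pc])
qed

section \<open>Coefficients at exponents divisible by p\<close>

definition dvd_supported :: "nat \<Rightarrow> 'a::zero fls \<Rightarrow> bool" where
  "dvd_supported p f \<longleftrightarrow> (\<forall>m. \<not> int p dvd m \<longrightarrow> fls_nth f m = 0)"

definition vanishes_below :: "'a::zero fls \<Rightarrow> ereal \<Rightarrow> bool" where
  "vanishes_below f c \<longleftrightarrow> (\<forall>m::int. ereal (real_of_int m) < c \<longrightarrow> fls_nth f m = 0)"

definition dvd_vanishes_below :: "nat \<Rightarrow> 'a::zero fls \<Rightarrow> ereal \<Rightarrow> bool" where
  "dvd_vanishes_below p f c \<longleftrightarrow>
     (\<forall>m::int. int p dvd m \<and> ereal (real_of_int m) < c \<longrightarrow> fls_nth f m = 0)"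

lemma vanishes_below_iff:
  "vanishes_below f c \<longleftrightarrow> f = 0 \<or> c \<le> ereal (real_of_int (fls_subdegree f))"
proof
  assume "vanishes_below f c"
  then show "f = 0 \<or> c \<le> ereal (real_of_int (fls_subdegree f))"
    unfolding vanishes_below_def using not_le by fastforce
next
  assume "f = 0 \<or> c \<le> ereal (real_of_int (fls_subdegree f))"
  then show "vanishes_below f c"
    unfolding vanishes_below_def by (auto dest: less_le_trans)
qed

lemma vanishes_below_0 [simp]: "vanishes_below 0 c"
  by (simp add: vanishes_below_def)

lemma vanishes_below_1: "c \<le> 0 \<Longrightarrow> vanishes_below (1::'a::zero_neq_one fls) c"
  by (simp add: vanishes_below_iff zero_ereal_def)

lemma vanishes_below_diff:
  "vanishes_below f c \<Longrightarrow> vanishes_below g c \<Longrightarrow> vanishes_below (f - g :: 'a::ab_group_add fls) c"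
  by (simp add: vanishes_below_def)

lemma vanishes_below_sum: "(\<And>x. x \<in> S \<Longrightarrow> vanishes_below (f x) c) \<Longrightarrow> vanishes_below (sum f S) c"
  by (simp add: vanishes_below_def fls_nth_sum)

lemma vanishes_below_mono: "vanishes_below f c \<Longrightarrow> c' \<le> c \<Longrightarrow> vanishes_below f c'"
  unfolding vanishes_below_def using less_le_trans by blast

lemma vanishes_below_mult:
  fixes f g :: "'a::field fls"
  shows "vanishes_below f a \<Longrightarrow> vanishes_below g b \<Longrightarrow> vanishes_below (f * g) (a + b)"
  unfolding vanishes_below_iff
  by (cases "f = 0"; cases "g = 0") (auto intro: add_mono order.trans)

lemma dvd_vanishes_below_0 [simp]: "dvd_vanishes_below p 0 c"
  by (simp add: dvd_vanishes_below_def)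

lemma dvd_vanishes_below_sum:
  "(\<And>x. x \<in> S \<Longrightarrow> dvd_vanishes_below p (f x) c) \<Longrightarrow> dvd_vanishes_below p (sum f S) c"
  by (simp add: dvd_vanishes_below_def fls_nth_sum)

lemma dvd_vanishes_below_mono: "dvd_vanishes_below p f c \<Longrightarrow> c' \<le> c \<Longrightarrow> dvd_vanishes_below p f c'"
  unfolding dvd_vanishes_below_def using less_le_trans by blast

lemma not_dvd_fls_subdegree:
  assumes "dvd_vanishes_below p f c" and "vfl f < c"
  shows "\<not> int p dvd fls_subdegree f"
proof
  assume "int p dvd fls_subdegree f"
  moreover have "f \<noteq> 0" using assms(2) by (auto simp: vfl_def)
  ultimately show False
    using assms unfolding dvd_vanishes_below_def vfl_def by auto
qed

lemma dvd_supported_0 [simp]: "dvd_supported p 0"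
  by (simp add: dvd_supported_def)

lemma dvd_supported_1 [simp]: "dvd_supported p (1::'a::zero_neq_one fls)"
  by (simp add: dvd_supported_def)

lemma dvd_supported_diff:
  "dvd_supported p f \<Longrightarrow> dvd_supported p g \<Longrightarrow> dvd_supported p (f - g :: 'a::ab_group_add fls)"
  by (simp add: dvd_supported_def)

lemma dvd_supported_sum: "(\<And>x. x \<in> S \<Longrightarrow> dvd_supported p (f x)) \<Longrightarrow> dvd_supported p (sum f S)"
  by (simp add: dvd_supported_def fls_nth_sum)

lemma dvd_supported_mult:
  fixes f g :: "'a::comm_ring_1 fls"
  assumes "dvd_supported p f" "dvd_supported p g"
  shows "dvd_supported p (f * g)"
  unfolding dvd_supported_def
proof (intro allI impI)
  fix m :: int assume m: "\<not> int p dvd m"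
  have "fls_nth f i * fls_nth g (m - i) = 0" for i
  proof (cases "int p dvd i")
    case True
    then have "\<not> int p dvd (m - i)" using m by (metis dvd_add diff_add_cancel)
    then show ?thesis using assms(2) unfolding dvd_supported_def by simp
  qed (use assms(1) in \<open>simp add: dvd_supported_def\<close>)
  then show "fls_nth (f * g) m = 0" by (simp add: fls_times_nth(2))
qed

lemma dvd_vanishes_below_mult:
  fixes f g :: "'a::comm_ring_1 fls"
  assumes "dvd_supported p f" "dvd_vanishes_below p g b"
  shows "dvd_vanishes_below p (f * g) (ereal (real_of_int (fls_subdegree f)) + b)"
  unfolding dvd_vanishes_below_def
proof (intro allI impI)
  fix m :: int
  assume m: "int p dvd m \<and> ereal (real_of_int m) < ereal (real_of_int (fls_subdegree f)) + b"
  have "fls_nth f i * fls_nth g (m - i) = 0" if i: "fls_subdegree f \<le> i" for i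
  proof (cases "int p dvd i")
    case True
    then have "int p dvd (m - i)" using m by simp
    moreover have "ereal (real_of_int (m - i)) < b"
      using m i by (cases b) auto
    ultimately show ?thesis using assms(2) unfolding dvd_vanishes_below_def by simp
  qed (use assms(1) in \<open>simp add: dvd_supported_def\<close>)
  then show "fls_nth (f * g) m = 0" by (simp add: fls_times_nth(2))
qed

lemma dvd_supported_power_CHAR_power:
  fixes f :: "'k::field fls"
  assumes pc: "prime CHAR('k)" and "finite S" "\<forall>m. m \<notin> S \<longrightarrow> fls_nth f m = 0"
    and e: "e \<ge> 1"
  shows "dvd_supported CHAR('k) (f ^ (CHAR('k) ^ e))"
  unfolding dvd_supported_def
proof (intro allI impI)
  fix k :: int assume k: "\<not> int CHAR('k) dvd k"
  have "int CHAR('k) dvd int (CHAR('k) ^ e)" using e by (simp add: dvd_power)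
  then have "k \<noteq> int (CHAR('k) ^ e) * m" for m using k by (auto intro: dvd_mult2)
  moreover have "fls_nth (fls_X_intpow m :: 'k fls) k = (if k = m then 1 else 0)" for m by simp
  ultimately show "fls_nth (f ^ CHAR('k) ^ e) k = 0"
    by (subst fls_power_CHAR_power_eq_sum[OF assms(1-3)]) (simp add: fls_nth_sum del: fls_shift_nth)
qed

section \<open>Unitriangular matrices\<close>

lemma mmul_assoc: "mmul n (mmul n X Y) Z i j = mmul n X (mmul n Y Z) i j"
  unfolding mmul_def
  by (simp add: sum_distrib_left sum_distrib_right mult.assoc) (rule sum.swap)

lemma mmul_idm_left: "i \<in> {1..n} \<Longrightarrow> mmul n idm X i j = X i j"
proof -
  assume i: "i \<in> {1..n}"
  have eq: "(\<lambda>l. (if i = l then 1 else 0) * X l j) = (\<lambda>l. if i = l then X l j else 0)" by auto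
  show ?thesis unfolding mmul_def idm_def eq using i by simp
qed

lemma mmul_idm_right: "j \<in> {1..n} \<Longrightarrow> mmul n X idm i j = X i j"
proof -
  assume j: "j \<in> {1..n}"
  have eq: "(\<lambda>l. X i l * (if l = j then 1 else 0)) = (\<lambda>l. if l = j then X i l else 0)" by auto
  show ?thesis unfolding mmul_def idm_def eq using j by simp
qed

lemma mmul_cong:
  assumes "\<And>l. l \<in> {1..n} \<Longrightarrow> X i l = X' i l" "\<And>l. l \<in> {1..n} \<Longrightarrow> Y l j = Y' l j"
  shows "mmul n X Y i j = mmul n X' Y' i j"
  unfolding mmul_def using assms by (intro sum.cong) auto

lemma frobm_mmul:
  fixes X Y :: "'k::field fls mx"
  assumes pc: "prime CHAR('k)"
  shows "frobm (CHAR('k) ^ e) (mmul n X Y) = mmul n (frobm (CHAR('k) ^ e) X) (frobm (CHAR('k) ^ e) Y)"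
proof -
  have pc': "prime CHAR('k fls)" using pc by simp
  show ?thesis
    unfolding frobm_def mmul_def
    by (intro ext, subst freshmans_dream_sum'[OF pc', of _ e]) (simp_all add: power_mult_distrib)
qed

lemma frobm_frobm: "frobm p (frobm (p ^ e) X) = frobm (p ^ Suc e) (X :: 'a::monoid_mult mx)"
  unfolding frobm_def by (simp add: power_mult[symmetric] mult.commute)

lemma frobm_idm: "p > 0 \<Longrightarrow> frobm p idm = (idm :: 'a::semiring_1 mx)"
  unfolding frobm_def idm_def by (intro ext) (simp add: zero_power)

lemma sum_from_diag:
  fixes f :: "nat \<Rightarrow> 'a::comm_monoid_add"
  assumes "i \<in> {1..n}" "\<And>l. l \<in> {1..n} \<Longrightarrow> l < i \<Longrightarrow> f l = 0"
  shows "(\<Sum>l\<in>{1..n}. f l) = f i + (\<Sum>l\<in>{i<..n}. f l)"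
proof -
  have e1: "{1..n} = {1..<i} \<union> {i..n}" and e2: "{i..n} = insert i {i<..n}" using assms(1) by auto
  have "(\<Sum>l\<in>{1..n}. f l) = (\<Sum>l\<in>{1..<i}. f l) + (\<Sum>l\<in>{i..n}. f l)"
    unfolding e1 by (rule sum.union_disjoint) auto
  also have "(\<Sum>l\<in>{i..n}. f l) = f i + (\<Sum>l\<in>{i<..n}. f l)"
    unfolding e2 by (rule sum.insert) auto
  also have "(\<Sum>l\<in>{1..<i}. f l) = 0" using assms by (intro sum.neutral) auto
  finally show ?thesis by simp
qed

function ut_inv :: "nat \<Rightarrow> 'a::comm_ring_1 mx \<Rightarrow> nat \<Rightarrow> nat \<Rightarrow> 'a" where
  "ut_inv n X i j = (if i < 1 \<or> i > n \<or> j < 1 \<or> j > n then 0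
     else idm i j - (\<Sum>l\<in>{i<..n}. X i l * ut_inv n X l j))"
  by auto
termination by (relation "measure (\<lambda>(n,X,i,j). n - i)") auto

declare ut_inv.simps[simp del]

lemma ut_inv_in: "i \<in> {1..n} \<Longrightarrow> j \<in> {1..n} \<Longrightarrow>
  ut_inv n X i j = idm i j - (\<Sum>l\<in>{i<..n}. X i l * ut_inv n X l j)"
  by (rule trans[OF ut_inv.simps]) auto

lemma ut_inv_out: "i \<notin> {1..n} \<or> j \<notin> {1..n} \<Longrightarrow> ut_inv n X i j = 0"
  by (subst ut_inv.simps) auto

lemma mmul_ut_inv:
  fixes X :: "'a::comm_ring_1 mx"
  assumes "is_UT n X" "i \<in> {1..n}" "j \<in> {1..n}"
  shows "mmul n X (ut_inv n X) i j = idm i j"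
proof -
  have "mmul n X (ut_inv n X) i j = X i i * ut_inv n X i j + (\<Sum>l\<in>{i<..n}. X i l * ut_inv n X l j)"
    unfolding mmul_def using assms by (intro sum_from_diag) (auto simp: is_UT_def)
  also have "\<dots> = idm i j"
    using assms by (simp add: ut_inv_in is_UT_def)
  finally show ?thesis .
qed

lemma ut_inv_unique:
  fixes X Y :: "'a::comm_ring_1 mx"
  assumes X: "is_UT n X" and Y0: "\<forall>i j. (i \<notin> {1..n} \<or> j \<notin> {1..n}) \<longrightarrow> Y i j = 0"
    and Y: "\<forall>i\<in>{1..n}. \<forall>j\<in>{1..n}. mmul n X Y i j = idm i j"
  shows "Y i j = ut_inv n X i j"
proof (induction i rule: measure_induct_rule[where f="\<lambda>i. n - i"])
  case (less i)
  show ?case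
  proof (cases "i \<in> {1..n} \<and> j \<in> {1..n}")
    case True
    have "mmul n X Y i j = X i i * Y i j + (\<Sum>l\<in>{i<..n}. X i l * Y l j)"
      unfolding mmul_def using True X by (intro sum_from_diag) (auto simp: is_UT_def)
    then have "Y i j = idm i j - (\<Sum>l\<in>{i<..n}. X i l * Y l j)"
      using True X Y by (auto simp: is_UT_def algebra_simps)
    also have "\<dots> = idm i j - (\<Sum>l\<in>{i<..n}. X i l * ut_inv n X l j)"
      using less by (intro arg_cong2[where f="(-)"] sum.cong refl) auto
    also have "\<dots> = ut_inv n X i j" using True by (simp add: ut_inv_in)
    finally show ?thesis .
  next
    case False
    then show ?thesis using Y0 ut_inv_out[of i n j X] by auto
  qed
qed

lemma minv_eq_ut_inv:
  fixes X :: "'a::comm_ring_1 mx"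
  assumes X: "is_UT n X"
  shows "minv n X = ut_inv n X"
  unfolding minv_def
proof (rule the_equality)
  show "(\<forall>i j. (i \<notin> {1..n} \<or> j \<notin> {1..n}) \<longrightarrow> ut_inv n X i j = 0) \<and>
        (\<forall>i\<in>{1..n}. \<forall>j\<in>{1..n}. mmul n X (ut_inv n X) i j = idm i j)"
    using ut_inv_out mmul_ut_inv[OF X] by blast
qed (use ut_inv_unique[OF X] in blast)

lemma is_UT_ut_inv:
  fixes X :: "'a::comm_ring_1 mx"
  assumes X: "is_UT n X"
  shows "is_UT n (ut_inv n X)"
proof -
  have "\<forall>j\<in>{1..n}. (j \<le> i \<longrightarrow> ut_inv n X i j = idm i j)" if "i \<in> {1..n}" for i
    using that
  proof (induction i rule: measure_induct_rule[where f="\<lambda>i. n - i"])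
    case (less i)
    show ?case
    proof (intro ballI impI)
      fix j assume j: "j \<in> {1..n}" "j \<le> i"
      have "(\<Sum>l\<in>{i<..n}. X i l * ut_inv n X l j) = 0"
        using less j by (intro sum.neutral) (auto simp: idm_def)
      then show "ut_inv n X i j = idm i j" using less.prems j by (simp add: ut_inv_in)
    qed
  qed
  then show ?thesis unfolding is_UT_def idm_def by auto
qed

lemma ut_inv_mmul:
  fixes X :: "'a::comm_ring_1 mx"
  assumes X: "is_UT n X" and ij: "i \<in> {1..n}" "j \<in> {1..n}"
  shows "mmul n (ut_inv n X) X i j = idm i j"
proof -
  let ?P = "ut_inv n X" let ?Q = "ut_inv n ?P"
  have P: "is_UT n ?P" by (rule is_UT_ut_inv[OF X])
  have XQ: "X a b = ?Q a b" if ab: "a \<in> {1..n}" "b \<in> {1..n}" for a b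
  proof -
    have "X a b = mmul n X idm a b" using ab by (simp add: mmul_idm_right)
    also have "\<dots> = mmul n X (mmul n ?P ?Q) a b"
      using ab mmul_ut_inv[OF P] by (intro mmul_cong) auto
    also have "\<dots> = mmul n (mmul n X ?P) ?Q a b" by (simp add: mmul_assoc)
    also have "\<dots> = mmul n idm ?Q a b"
      using ab mmul_ut_inv[OF X] by (intro mmul_cong) auto
    also have "\<dots> = ?Q a b" using ab by (simp add: mmul_idm_left)
    finally show ?thesis .
  qed
  have "mmul n ?P X i j = mmul n ?P ?Q i j"
    using XQ ij by (intro mmul_cong) auto
  also have "\<dots> = idm i j" using mmul_ut_inv[OF P ij] .
  finally show ?thesis .
qed

lemma is_UT_mmul:
  fixes X Y :: "'a::comm_semiring_1 mx"
  assumes X: "is_UT n X" and Y: "is_UT n Y"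
  shows "is_UT n (mmul n X Y)"
  unfolding is_UT_def
proof (intro ballI conjI impI)
  fix i j assume i: "i \<in> {1..n}" and j: "j \<in> {1..n}"
  show "mmul n X Y i j = 0" if ji: "j < i"
    unfolding mmul_def
  proof (intro sum.neutral ballI)
    fix l assume l: "l \<in> {1..n}"
    show "X i l * Y l j = 0"
    proof (cases "l < i")
      case True then show ?thesis using X i l unfolding is_UT_def by simp
    next
      case False then have "j < l" using ji by simp
      then show ?thesis using Y j l unfolding is_UT_def by simp
    qed
  qed
  show "mmul n X Y i j = 1" if "i = j"
  proof -
    have "mmul n X Y i i = X i i * Y i i + (\<Sum>l\<in>{i<..n}. X i l * Y l i)"
      unfolding mmul_def using X i by (intro sum_from_diag) (auto simp: is_UT_def)
    also have "(\<Sum>l\<in>{i<..n}. X i l * Y l i) = 0"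
      using Y i by (intro sum.neutral) (auto simp: is_UT_def)
    finally show ?thesis using X Y i that by (simp add: is_UT_def)
  qed
qed

lemma mmul_minv_sub_idm:
  fixes M C E V :: "'a::comm_ring_1 mx"
  assumes M: "is_UT n M" and MCV: "\<And>a b. a \<in> {1..n} \<Longrightarrow> b \<in> {1..n} \<Longrightarrow> M a b = mmul n C V a b"
    and ij: "i \<in> {1..n}" "j \<in> {1..n}"
  shows "mmul n (minv n M) (mmul n E V) i j - idm i j =
    (\<Sum>k\<in>{1..n}. \<Sum>l\<in>{1..n}. minv n M i k * (E k l - C k l) * V l j)"
proof -
  have "idm i j = mmul n (minv n M) M i j"
    using ut_inv_mmul[OF M ij] minv_eq_ut_inv[OF M] by simp
  also have "\<dots> = mmul n (minv n M) (mmul n C V) i j"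
    using MCV ij by (intro mmul_cong) auto
  finally show ?thesis
    by (simp add: mmul_def sum_subtractf[symmetric] sum_distrib_left algebra_simps)
qed

section \<open>The exponents mu\<close>

lemma mlam_ne_PInf: "mlam A lam \<noteq> \<infinity>"
  unfolding mlam_def sum_Pinfty by (auto simp: mij_def vfl_def)

lemma mlam_singleton [simp]: "mlam A [a] = 0"
  unfolding mlam_def by simp

lemma mlam_Cons_Cons [simp]: "mlam A (a # b # rest) = mij A a b + mlam A (b # rest)"
  unfolding mlam_def by (simp del: sum.lessThan_Suc add: sum.lessThan_Suc_shift)

lemma mlam_append:
  assumes "lam \<noteq> []" "nu \<noteq> []" "last lam = hd nu"
  shows "mlam A (lam @ tl nu) = mlam A lam + mlam A nu"
  using assms
proof (induction lam rule: induct_list012)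
  case (2 a)
  then have "[a] @ tl nu = nu" by (cases nu) auto
  then show ?case by simp
next
  case (3 a b rest)
  have "mlam A ((a # b # rest) @ tl nu) = mij A a b + mlam A ((b # rest) @ tl nu)"
    by simp
  also have "\<dots> = mij A a b + (mlam A (b # rest) + mlam A nu)"
    using 3 by simp
  finally show ?case by (simp add: add.assoc)
qed auto

lemma sorted_wrt_less_hd_last:
  assumes "sorted_wrt (<) xs" "x \<in> set (xs :: nat list)"
  shows "hd xs \<le> x \<and> x \<le> last xs"
  using assms
proof (induction xs)
  case (Cons a ys)
  show ?case
  proof (cases "ys = []")
    case False
    then have al: "a < last ys" using Cons.prems(1) by simp
    from Cons.prems(2) have "x = a \<or> x \<in> set ys" by simp
    then show ?thesis
    proof
      assume "x \<in> set ys"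
      then show ?thesis using Cons.IH Cons.prems(1) False al by fastforce
    qed (use al False in simp)
  qed (use Cons in auto)
qed auto

lemma partitions_subset: "lam \<in> partitions i j \<Longrightarrow> set lam \<subseteq> {i..j}"
  unfolding partitions_def using sorted_wrt_less_hd_last by fastforce

lemma finite_partitions: "finite (partitions i j)"
proof (rule finite_subset)
  show "partitions i j \<subseteq> {xs. set xs \<subseteq> {i..j} \<and> length xs \<le> card {i..j}}"
  proof
    fix xs assume xs: "xs \<in> partitions i j"
    then have "length xs = card (set xs)"
      unfolding partitions_def by (simp add: distinct_card strict_sorted_iff)
    also have "\<dots> \<le> card {i..j}" using partitions_subset[OF xs] by (intro card_mono) auto
    finally show "xs \<in> {xs. set xs \<subseteq> {i..j} \<and> length xs \<le> card {i..j}}"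
      using partitions_subset[OF xs] by auto
  qed
qed (intro finite_lists_length_le finite_atLeastAtMost)

lemma partitions_same: "partitions i i = {[i]}"
proof -
  have "lam = [i]" if "lam \<in> partitions i i" for lam
  proof -
    from that have l: "lam \<noteq> []" "hd lam = i" "last lam = i" "sorted_wrt (<) lam"
      unfolding partitions_def by auto
    then obtain rest where lam: "lam = i # rest" by (cases lam) auto
    show ?thesis
    proof (cases "rest = []")
      case False
      then have "last rest \<in> set rest" by simp
      then show ?thesis using l lam False by auto
    qed (use lam in auto)
  qed
  then show ?thesis unfolding partitions_def by auto
qed

lemma mu_same [simp]: "mu A i i = 0"
  unfolding mu_def partitions_same by simp

lemma partitions_nonempty: "i \<le> j \<Longrightarrow> partitions i j \<noteq> {}"
proof (cases "i = j")
  case False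
  assume "i \<le> j"
  with False have "[i, j] \<in> partitions i j" unfolding partitions_def by auto
  then show ?thesis by auto
qed (simp add: partitions_same)

lemma mu_in_image: "i \<le> j \<Longrightarrow> mu A i j \<in> mlam A ` partitions i j"
  unfolding mu_def using finite_partitions partitions_nonempty by (intro Max_in) auto

lemma mu_ne_PInf: "i \<le> j \<Longrightarrow> mu A i j \<noteq> \<infinity>"
  using mu_in_image[of i j A] mlam_ne_PInf by (metis imageE)

lemma mlam_le_mu: "lam \<in> partitions i j \<Longrightarrow> mlam A lam \<le> mu A i j"
  unfolding mu_def using finite_partitions by (intro Max_ge) auto

lemma mij_le_mu: "i < j \<Longrightarrow> mij A i j \<le> mu A i j"
  using mlam_le_mu[of "[i, j]" i j A] by (simp add: partitions_def)

lemma append_partitions: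
  assumes "lam \<in> partitions i k" "nu \<in> partitions k j"
  shows "lam @ tl nu \<in> partitions i j"
proof -
  from assms have l: "lam \<noteq> []" "hd lam = i" "last lam = k" "sorted_wrt (<) lam"
    and m: "nu \<noteq> []" "hd nu = k" "last nu = j" "sorted_wrt (<) nu"
    unfolding partitions_def by auto
  obtain rest where nu: "nu = k # rest" using m by (cases nu) auto
  have "sorted_wrt (<) (lam @ rest)"
    unfolding sorted_wrt_append using l m nu sorted_wrt_less_hd_last[OF l(4)] by fastforce
  moreover have "last (lam @ rest) = j"
    using l m nu by (cases "rest = []") auto
  ultimately show ?thesis using l nu unfolding partitions_def by auto
qed

lemma mu_superadditive:
  assumes "i \<le> k" "k \<le> j"
  shows "mu A i k + mu A k j \<le> mu A i j"
proof -
  obtain lam nu where lam: "lam \<in> partitions i k" "mu A i k = mlam A lam"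
    and nu: "nu \<in> partitions k j" "mu A k j = mlam A nu"
    using mu_in_image assms by (metis imageE)
  have "mlam A (lam @ tl nu) = mlam A lam + mlam A nu"
    using lam nu unfolding partitions_def by (intro mlam_append) auto
  moreover have "mlam A (lam @ tl nu) \<le> mu A i j"
    by (rule mlam_le_mu) (rule append_partitions[OF lam(1) nu(1)])
  ultimately show ?thesis using lam nu by simp
qed

lemma neg_scale_mu_le_subdegree:
  fixes A :: "'a::zero fls mx"
  assumes "i < j" "A i j \<noteq> 0" "Q \<ge> 0"
  shows "- ereal Q * mu A i j \<le> ereal (Q * real_of_int (fls_subdegree (A i j)))"
proof -
  have le: "- ereal (real_of_int (fls_subdegree (A i j))) \<le> mu A i j"
    using mij_le_mu[OF assms(1), of A] assms(2) by (simp add: mij_def vfl_def)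
  then obtain r where "mu A i j = ereal r" using mu_ne_PInf[of i j A] assms(1)
    by (cases "mu A i j") auto
  moreover have "Q * - real_of_int (fls_subdegree (A i j)) \<le> Q * r"
    using le \<open>mu A i j = ereal r\<close> assms(3) by (intro mult_left_mono) auto
  ultimately show ?thesis by simp
qed

section \<open>Unitriangular matrices with entrywise valuation bounds\<close>

definition subadditive_bound :: "nat \<Rightarrow> (nat \<Rightarrow> nat \<Rightarrow> ereal) \<Rightarrow> bool" where
  "subadditive_bound n c \<longleftrightarrow> (\<forall>i\<in>{1..n}. c i i \<le> 0) \<and>
     (\<forall>i\<in>{1..n}. \<forall>l\<in>{1..n}. \<forall>j\<in>{1..n}. i \<le> l \<and> l \<le> j \<longrightarrow> c i j \<le> c i l + c l j)"

definition bounded_UT :: "nat \<Rightarrow> nat \<Rightarrow> (nat \<Rightarrow> nat \<Rightarrow> ereal) \<Rightarrow> 'a::{zero,one} fls mx \<Rightarrow> bool" where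
  "bounded_UT n p c X \<longleftrightarrow> is_UT n X \<and>
     (\<forall>i\<in>{1..n}. \<forall>j\<in>{1..n}. dvd_supported p (X i j) \<and> vanishes_below (X i j) (c i j))"

lemma neg_ereal_mult_le_add:
  fixes x y z :: ereal
  assumes "x \<noteq> \<infinity>" "y \<noteq> \<infinity>" "z \<noteq> \<infinity>" "x + y \<le> z" "Q > 0"
  shows "- ereal Q * z \<le> - ereal Q * x + - ereal Q * y"
proof (cases x)
  case MInf then show ?thesis using assms by (cases y) auto
next
  case (real rx)
  show ?thesis
  proof (cases y)
    case MInf then show ?thesis using assms real by auto
  next
    case (real ry)
    then obtain rz where rz: "z = ereal rz" using assms \<open>x = ereal rx\<close> by (cases z) auto
    have "rx + ry \<le> rz" using assms real \<open>x = ereal rx\<close> rz by simp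
    then have "Q * (rx + ry) \<le> Q * rz" using assms(5) by (intro mult_left_mono) auto
    then show ?thesis using real \<open>x = ereal rx\<close> rz by (simp add: algebra_simps)
  qed (use assms in auto)
qed (use assms in auto)

lemma subadditive_bound_neg_scale_mu:
  assumes "Q > 0"
  shows "subadditive_bound n (\<lambda>i j. - ereal Q * mu A i j)"
  unfolding subadditive_bound_def
proof (intro conjI ballI impI)
  fix i l j :: nat assume "i \<le> l \<and> l \<le> j"
  then show "- ereal Q * mu A i j \<le> - ereal Q * mu A i l + - ereal Q * mu A l j"
    using assms by (intro neg_ereal_mult_le_add mu_ne_PInf mu_superadditive) auto
qed simp

lemma bounded_UT_idm: "subadditive_bound n c \<Longrightarrow> bounded_UT n p c (idm :: 'a::zero_neq_one fls mx)"
  by (auto simp: bounded_UT_def subadditive_bound_def is_UT_def idm_def intro: vanishes_below_1)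

lemma bounded_UT_mmul:
  fixes X Y :: "'a::field fls mx"
  assumes c: "subadditive_bound n c" and X: "bounded_UT n p c X" and Y: "bounded_UT n p c Y"
  shows "bounded_UT n p c (mmul n X Y)"
  unfolding bounded_UT_def
proof (intro conjI ballI)
  show "is_UT n (mmul n X Y)" using X Y by (simp add: bounded_UT_def is_UT_mmul)
next
  fix i j assume i: "i \<in> {1..n}" and j: "j \<in> {1..n}"
  show "dvd_supported p (mmul n X Y i j)"
    unfolding mmul_def using X Y i j
    by (intro dvd_supported_sum dvd_supported_mult) (auto simp: bounded_UT_def)
  have "vanishes_below (X i l * Y l j) (c i j)" if l: "l \<in> {1..n}" for l
  proof (cases "i \<le> l \<and> l \<le> j")
    case True
    have "vanishes_below (X i l * Y l j) (c i l + c l j)"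
      using X Y i j l by (intro vanishes_below_mult) (auto simp: bounded_UT_def)
    moreover have "c i j \<le> c i l + c l j" using c i j l True unfolding subadditive_bound_def by simp
    ultimately show ?thesis by (rule vanishes_below_mono)
  next
    case False
    then have "X i l * Y l j = 0" using X Y i j l unfolding bounded_UT_def is_UT_def by auto
    then show ?thesis by (simp only: vanishes_below_0)
  qed
  then show "vanishes_below (mmul n X Y i j) (c i j)"
    unfolding mmul_def by (intro vanishes_below_sum)
qed

lemma bounded_UT_ut_inv:
  fixes X :: "'a::field fls mx"
  assumes c: "subadditive_bound n c" and X: "bounded_UT n p c X"
  shows "bounded_UT n p c (ut_inv n X)"
proof -
  have ut: "is_UT n (ut_inv n X)" using X by (simp add: bounded_UT_def is_UT_ut_inv)
  have "\<forall>j\<in>{1..n}. dvd_supported p (ut_inv n X i j) \<and> vanishes_below (ut_inv n X i j) (c i j)"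
    if "i \<in> {1..n}" for i
    using that
  proof (induction i rule: measure_induct_rule[where f="\<lambda>i. n - i"])
    case (less i)
    show ?case
    proof (intro ballI conjI)
      fix j assume j: "j \<in> {1..n}"
      have eq: "ut_inv n X i j = idm i j - (\<Sum>l\<in>{i<..n}. X i l * ut_inv n X l j)"
        using less.prems j by (rule ut_inv_in)
      show "dvd_supported p (ut_inv n X i j)" unfolding eq
        using less X j
        by (intro dvd_supported_diff dvd_supported_sum dvd_supported_mult)
          (auto simp: bounded_UT_def idm_def)
      have "vanishes_below (X i l * ut_inv n X l j) (c i j)" if l: "l \<in> {i<..n}" for l
      proof (cases "l \<le> j")
        case True
        have "vanishes_below (X i l * ut_inv n X l j) (c i l + c l j)"
          using X less l j by (intro vanishes_below_mult) (auto simp: bounded_UT_def)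
        moreover have "c i j \<le> c i l + c l j"
          using c less.prems j l True unfolding subadditive_bound_def by simp
        ultimately show ?thesis by (rule vanishes_below_mono)
      next
        case False
        then have "ut_inv n X l j = 0" using ut l j unfolding is_UT_def by auto
        then show ?thesis by simp
      qed
      moreover have "vanishes_below (idm i j :: 'a fls) (c i j)"
        using c less.prems by (auto simp: idm_def subadditive_bound_def intro: vanishes_below_1)
      ultimately show "vanishes_below (ut_inv n X i j) (c i j)" unfolding eq
        by (intro vanishes_below_diff vanishes_below_sum)
    qed
  qed
  then show ?thesis using ut unfolding bounded_UT_def by auto
qed

lemma dvd_vanishes_below_sandwich:
  fixes P D V :: "'a::field fls mx"
  assumes c: "subadditive_bound n c" and P: "bounded_UT n p c P" and V: "bounded_UT n p c V"
    and D: "\<And>k l. k \<in> {1..n} \<Longrightarrow> l \<in> {1..n} \<Longrightarrow> dvd_vanishes_below p (D k l) (c k l + ereal b)"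
    and D_lower: "\<And>k l. k \<in> {1..n} \<Longrightarrow> l \<in> {1..n} \<Longrightarrow> l < k \<Longrightarrow> D k l = 0"
    and ij: "i \<in> {1..n}" "j \<in> {1..n}"
  shows "dvd_vanishes_below p (\<Sum>k\<in>{1..n}. \<Sum>l\<in>{1..n}. P i k * D k l * V l j) (c i j + ereal b)"
proof (intro dvd_vanishes_below_sum)
  fix k l assume kl: "k \<in> {1..n}" "l \<in> {1..n}"
  show "dvd_vanishes_below p (P i k * D k l * V l j) (c i j + ereal b)"
  proof (cases "P i k = 0 \<or> D k l = 0 \<or> V l j = 0")
    case False
    then have "\<not> k < i" "\<not> l < k" "\<not> j < l"
      using P V D_lower ij kl unfolding bounded_UT_def is_UT_def by auto
    then have "c i j \<le> c i k + c k j" "c k j \<le> c k l + c l j"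
      using c ij kl unfolding subadditive_bound_def by auto
    then have "c i j \<le> c i k + (c k l + c l j)"
      using add_left_mono order.trans by blast
    then have "c i j + ereal b \<le> c i k + (c k l + c l j) + ereal b"
      by (rule add_right_mono)
    also have "\<dots> = c l j + (c i k + (c k l + ereal b))" by (simp add: ac_simps)
    also have "\<dots> \<le> ereal (real_of_int (fls_subdegree (V l j))) +
        (ereal (real_of_int (fls_subdegree (P i k))) + (c k l + ereal b))"
    proof -
      have "vanishes_below (P i k) (c i k)" "vanishes_below (V l j) (c l j)"
        using P V ij kl unfolding bounded_UT_def by blast+
      then show ?thesis using False by (intro add_mono order.refl) (auto simp: vanishes_below_iff)
    qed
    finally have bound: "c i j + ereal b \<le> \<dots>" .
    have "dvd_vanishes_below p (V l j * (P i k * D k l))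
        (ereal (real_of_int (fls_subdegree (V l j))) +
          (ereal (real_of_int (fls_subdegree (P i k))) + (c k l + ereal b)))"
      using P V D ij kl by (intro dvd_vanishes_below_mult) (auto simp: bounded_UT_def)
    then show ?thesis
      using bound by (simp add: dvd_vanishes_below_mono mult.commute mult.left_commute)
  qed auto
qed

section \<open>The series h = (1 + X^R)^(-1/R)\<close>

lemma fps_mult_nth_below_subdegree:
  fixes F D :: "'a::comm_ring_1 fps"
  assumes "\<forall>t<m. D $ t = 0"
  shows "\<forall>i<m. (F * D) $ i = 0" and "(F * D) $ m = F $ 0 * D $ m"
proof -
  show "\<forall>i<m. (F * D) $ i = 0"
    using assms by (auto simp: fps_mult_nth intro!: sum.neutral)
  have "(F * D) $ m = F $ 0 * D $ (m - 0) + (\<Sum>j=Suc 0..m. F $ j * D $ (m - j))"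
    unfolding fps_mult_nth by (rule sum.atLeast_Suc_atMost) simp
  also have "(\<Sum>j=Suc 0..m. F $ j * D $ (m - j)) = 0"
    using assms by (intro sum.neutral) auto
  finally show "(F * D) $ m = F $ 0 * D $ m" by simp
qed

lemma fps_power_add_monom:
  fixes F :: "'a::comm_ring_1 fps" and c :: 'a
  assumes F0: "F $ 0 = 1" and m: "m \<ge> 1"
  defines "E \<equiv> fps_const c * fps_X ^ m"
  shows "(\<forall>i<m. ((F + E) ^ k - F ^ k) $ i = 0) \<and> ((F + E) ^ k - F ^ k) $ m = of_nat k * c"
proof (induction k)
  case (Suc k)
  define D where "D = (F + E) ^ k - F ^ k"
  have D: "\<forall>t<m. D $ t = 0" "D $ m = of_nat k * c" using Suc D_def by auto
  have EG: "(E * G) $ i = (if i < m then 0 else c * G $ (i - m))" for G :: "'a fps" and i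
    unfolding E_def by (simp add: mult.assoc fps_X_power_mult_nth)
  have eq: "(F + E) ^ Suc k - F ^ Suc k = F * D + E * F ^ k + E * D"
    unfolding D_def by (simp add: algebra_simps)
  have "\<forall>i<m. (E * F ^ k) $ i = 0" "\<forall>i<m. (E * D) $ i = 0" using EG by auto
  then have "\<forall>i<m. ((F + E) ^ Suc k - F ^ Suc k) $ i = 0"
    unfolding eq using fps_mult_nth_below_subdegree(1)[OF D(1), of F] by simp
  moreover have "((F + E) ^ Suc k - F ^ Suc k) $ m = of_nat (Suc k) * c"
  proof -
    have "D $ 0 = 0" using D(1) m by simp
    moreover have "(F ^ k) $ 0 = 1" using F0 by (simp add: fps_nth_power_0)
    ultimately have "(E * D) $ m = 0" "(E * F ^ k) $ m = c" using EG by auto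
    then show ?thesis
      unfolding eq using fps_mult_nth_below_subdegree(2)[OF D(1), of F] F0 D(2)
      by (simp add: algebra_simps)
  qed
  ultimately show ?case by blast
qed simp

lemma fps_power_nth_eqI:
  fixes F G :: "'a::comm_ring_1 fps"
  assumes "\<forall>i\<le>n. F $ i = G $ i"
  shows "\<forall>i\<le>n. (F ^ k) $ i = (G ^ k) $ i"
proof (induction k)
  case (Suc k)
  show ?case
  proof (intro allI impI)
    fix i assume i: "i \<le> n"
    have "(F ^ Suc k) $ i = (\<Sum>j=0..i. F $ j * (F ^ k) $ (i - j))" by (simp add: fps_mult_nth)
    also have "\<dots> = (\<Sum>j=0..i. G $ j * (G ^ k) $ (i - j))"
      using assms Suc i by (intro sum.cong) auto
    also have "\<dots> = (G ^ Suc k) $ i" by (simp add: fps_mult_nth)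
    finally show "(F ^ Suc k) $ i = (G ^ Suc k) $ i" .
  qed
qed simp

lemma fps_root_step:
  fixes T a :: "'a::field fps"
  assumes R: "of_nat R \<noteq> (0::'a)" and T0: "T $ 0 = 1" and T: "\<forall>i\<le>n. (T ^ R) $ i = a $ i"
  defines "T' \<equiv> T + fps_const ((a $ Suc n - (T ^ R) $ Suc n) / of_nat R) * fps_X ^ Suc n"
  shows "\<forall>i\<le>Suc n. (T' ^ R) $ i = a $ i"
proof -
  have "(\<forall>i<Suc n. (T' ^ R - T ^ R) $ i = 0) \<and>
      (T' ^ R - T ^ R) $ Suc n = of_nat R * ((a $ Suc n - (T ^ R) $ Suc n) / of_nat R)"
    unfolding T'_def by (rule fps_power_add_monom) (use T0 in auto)
  then show ?thesis
    using R T by (auto simp: le_Suc_eq)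
qed

lemma fps_root_exists:
  fixes a :: "'a::field fps"
  assumes R: "of_nat R \<noteq> (0::'a)" and a0: "a $ 0 = 1"
  shows "\<exists>b. b $ 0 = 1 \<and> b ^ R = a"
proof -
  define T where "T = rec_nat (1::'a fps)
     (\<lambda>n F. F + fps_const ((a $ Suc n - (F ^ R) $ Suc n) / of_nat R) * fps_X ^ Suc n)"
  have T0: "T 0 = 1"
    and TS: "T (Suc n) = T n + fps_const ((a $ Suc n - (T n ^ R) $ Suc n) / of_nat R) * fps_X ^ Suc n"
    for n
    unfolding T_def by simp_all
  have stable: "T n' $ i = T n $ i" if "i \<le> n" "n \<le> n'" for i n n'
    using that(2)
  proof (induction n' rule: dec_induct)
    case (step k)
    then have "i \<noteq> Suc k" using that(1) by simp
    then have "(fps_X ^ Suc k :: 'a fps) $ i = 0" by (simp only: fps_X_power_nth if_not_P if_False)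
    then show ?case using step by (simp add: TS)
  qed simp
  have inv: "T n $ 0 = 1 \<and> (\<forall>i\<le>n. (T n ^ R) $ i = a $ i)" for n
  proof (induction n)
    case (Suc n)
    then have "\<forall>i\<le>Suc n. (T (Suc n) ^ R) $ i = a $ i"
      unfolding TS by (intro fps_root_step[OF R]) auto
    moreover have "T (Suc n) $ 0 = 1" using Suc by (simp add: TS)
    ultimately show ?case by blast
  qed (use a0 in \<open>simp add: T0\<close>)
  define b where "b = Abs_fps (\<lambda>n. T n $ n)"
  have "(b ^ R) $ n = a $ n" for n
  proof -
    have "b $ i = T n $ i" if "i \<le> n" for i unfolding b_def using stable[of i i n] that by simp
    then have "(b ^ R) $ n = (T n ^ R) $ n" using fps_power_nth_eqI by blast
    then show ?thesis using inv by simp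
  qed
  then have "b ^ R = a" by (rule fps_ext)
  moreover have "b $ 0 = 1" unfolding b_def using inv by simp
  ultimately show ?thesis by blast
qed

lemma fps_root_unique:
  fixes h1 h2 :: "'a::field fps"
  assumes R: "of_nat R \<noteq> (0::'a)" and "h1 $ 0 = 1" "h2 $ 0 = 1" "h1 ^ R = h2 ^ R"
  shows "h1 = h2"
proof -
  have "(h1 - h2) * (\<Sum>i<R. h2 ^ (R - Suc i) * h1 ^ i) = 0"
    using assms(4) by (simp add: power_diff_sumr2[symmetric])
  moreover have "(\<Sum>i<R. h2 ^ (R - Suc i) * h1 ^ i) $ 0 = of_nat R"
    using assms(2,3) by (simp add: fps_sum_nth fps_nth_power_0)
  then have "(\<Sum>i<R. h2 ^ (R - Suc i) * h1 ^ i) \<noteq> 0" using R by auto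
  ultimately show ?thesis by simp
qed

definition fps_dvd_supported :: "nat \<Rightarrow> 'a::zero fps \<Rightarrow> bool" where
  "fps_dvd_supported R F \<longleftrightarrow> (\<forall>e. \<not> R dvd e \<longrightarrow> F $ e = 0)"

lemma fps_dvd_supported_1 [simp]: "fps_dvd_supported R (1::'a::{zero,one} fps)"
  unfolding fps_dvd_supported_def by (auto simp: fps_one_nth)

lemma fps_dvd_supported_add:
  "fps_dvd_supported R F \<Longrightarrow> fps_dvd_supported R G \<Longrightarrow> fps_dvd_supported R (F + G :: 'a::monoid_add fps)"
  unfolding fps_dvd_supported_def by simp

lemma fps_dvd_supported_X_power: "fps_dvd_supported R (fps_X ^ R :: 'a::comm_ring_1 fps)"
  unfolding fps_dvd_supported_def by simp

lemma fps_dvd_supported_mult: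
  fixes F G :: "'a::comm_ring_1 fps"
  assumes "fps_dvd_supported R F" "fps_dvd_supported R G"
  shows "fps_dvd_supported R (F * G)"
  unfolding fps_dvd_supported_def
proof (intro allI impI)
  fix e assume e: "\<not> R dvd e"
  have "F $ i * G $ (e - i) = 0" if "i \<le> e" for i
  proof (cases "R dvd i")
    case True
    then have "\<not> R dvd (e - i)" using e that by (metis dvd_add le_add_diff_inverse)
    then show ?thesis using assms(2) unfolding fps_dvd_supported_def by simp
  qed (use assms(1) in \<open>simp add: fps_dvd_supported_def\<close>)
  then show "(F * G) $ e = 0" by (simp add: fps_mult_nth)
qed

lemma fps_dvd_supported_power:
  "fps_dvd_supported R (F :: 'a::comm_ring_1 fps) \<Longrightarrow> fps_dvd_supported R (F ^ k)"
  by (induction k) (auto intro: fps_dvd_supported_mult)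

lemma fps_dvd_supported_compose_X_power:
  fixes F :: "'a::comm_ring_1 fps"
  shows "fps_dvd_supported R (F oo fps_X ^ R)"
  unfolding fps_dvd_supported_def
proof (intro allI impI)
  fix e assume "\<not> R dvd e"
  then have "((fps_X ^ R :: 'a fps) ^ i) $ e = 0" for i
    by (auto simp: power_mult[symmetric])
  then show "(F oo fps_X ^ R) $ e = 0" by (simp add: fps_compose_nth)
qed

lemma fps_inverse_root_exists:
  assumes R: "of_nat R \<noteq> (0::'a::field)"
  shows "\<exists>h::'a fps. h $ 0 = 1 \<and> h ^ R * (1 + fps_X ^ R) = 1 \<and> fps_dvd_supported R h"
proof -
  have R0: "R > 0" using R by (cases R) auto
  obtain g :: "'a fps" where g: "g $ 0 = 1" "g ^ R = inverse (1 + fps_X)"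
    using fps_root_exists[OF R, of "inverse (1 + fps_X)"] by auto
  have XR0: "(fps_X ^ R :: 'a fps) $ 0 = 0" using R0 by simp
  define h where "h = g oo fps_X ^ R"
  have "h ^ R = g ^ R oo fps_X ^ R" unfolding h_def by (rule fps_compose_power[OF XR0])
  moreover have "(1 + fps_X :: 'a fps) oo fps_X ^ R = 1 + fps_X ^ R"
    using XR0 by (simp add: fps_compose_add_distrib)
  ultimately have "h ^ R * (1 + fps_X ^ R) = (g ^ R * (1 + fps_X)) oo fps_X ^ R"
    by (simp add: fps_compose_mult_distrib[OF XR0])
  also have "g ^ R * (1 + fps_X) = 1" unfolding g(2) by (rule inverse_mult_eq_1) simp
  finally have "h ^ R * (1 + fps_X ^ R) = 1" by simp
  moreover have "h $ 0 = 1" unfolding h_def using g(1) by (simp add: fps_compose_nth)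
  ultimately show ?thesis unfolding h_def using fps_dvd_supported_compose_X_power by blast
qed

lemma hR_spec:
  assumes R: "of_nat R \<noteq> (0::'a::field)"
  shows "(hR R :: 'a fps) $ 0 = 1 \<and> (hR R :: 'a fps) ^ R * (1 + fps_X ^ R) = 1
    \<and> fps_dvd_supported R (hR R :: 'a fps)"
proof -
  obtain h :: "'a fps" where h: "h $ 0 = 1" "h ^ R * (1 + fps_X ^ R) = 1" "fps_dvd_supported R h"
    using fps_inverse_root_exists[OF R] by blast
  have "(1 + fps_X ^ R :: 'a fps) \<noteq> 0" using h(2) by (metis mult_zero_right zero_neq_one)
  then have uniq: "h' = h" if "h' $ 0 = 1" "h' ^ R * (1 + fps_X ^ R) = 1" for h'
    using fps_root_unique[OF R that(1) h(1)] that(2) h(2) mult_right_cancel by metis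
  have "hR R = h"
    unfolding hR_def by (rule the_equality) (use h uniq in blast)+
  then show ?thesis using h by simp
qed

section \<open>The entries of A - C\<close>

lemma dvd_vanishes_below_fps_minus_1:
  fixes K :: "'a::comm_ring_1 fps"
  assumes K: "fps_dvd_supported R K" and K0: "K $ 0 = 1" and pR: "coprime p R" and p: "p > 0"
  shows "dvd_vanishes_below p (fps_to_fls K - 1) (ereal (real (p * R)))"
  unfolding dvd_vanishes_below_def
proof (intro allI impI)
  fix e :: int assume e: "int p dvd e \<and> ereal (real_of_int e) < ereal (real (p * R))"
  show "fls_nth (fps_to_fls K - 1) e = 0"
  proof (cases "e > 0")
    case True
    have "\<not> R dvd nat e"
    proof
      assume "R dvd nat e"
      moreover have "int p dvd int (nat e)" using e True by simp
      then have "p dvd nat e" by (simp only: int_dvd_int_iff)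
      ultimately have "p * R dvd nat e" using pR by (simp add: divides_mult)
      then have "p * R \<le> nat e" using True by (simp add: dvd_imp_le)
      then have "int (p * R) \<le> e" using True by (simp add: le_nat_iff)
      then have "real (p * R) \<le> real_of_int e" by (metis of_int_le_iff of_int_of_nat_eq)
      then show False using e by simp
    qed
    then show ?thesis using K True unfolding fps_dvd_supported_def by simp
  qed (use K0 in \<open>cases "e = 0"; simp\<close>)
qed

lemma dvd_vanishes_below_powi_minus_1:
  fixes h :: "'a::field fps"
  assumes h: "h $ 0 = 1" "h ^ R * (1 + fps_X ^ R) = 1" "fps_dvd_supported R h" and R: "R > 0"
    and pR: "coprime p R" and p: "p > 0"
  shows "dvd_vanishes_below p (fps_to_fls h powi m - 1) (ereal (real (p * R)))"
proof -
  define h' where "h' = h ^ (R - 1) * (1 + fps_X ^ R)"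
  define K where "K = (if m \<ge> 0 then h ^ nat m else h' ^ nat (- m))"
  have "fps_dvd_supported R K" unfolding K_def h'_def using h R
    by (auto intro!: fps_dvd_supported_power fps_dvd_supported_mult fps_dvd_supported_add
      fps_dvd_supported_X_power)
  moreover have "K $ 0 = 1" unfolding K_def h'_def using h R by (simp add: fps_nth_power_0 zero_power)
  moreover have "inverse (fps_to_fls h) = fps_to_fls h'"
  proof (rule inverse_unique)
    have "h * h' = h ^ R * (1 + fps_X ^ R)"
      unfolding h'_def using R by (simp add: mult.assoc[symmetric] power_eq_if)
    then show "fps_to_fls h * fps_to_fls h' = 1"
      using h(2) by (simp flip: fls_times_fps_to_fls)
  qed
  then have "fps_to_fls h powi m = fps_to_fls K"
    unfolding K_def power_int_def by (simp add: fps_to_fls_power)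
  ultimately show ?thesis using dvd_vanishes_below_fps_minus_1[OF _ _ pR p] by simp
qed

lemma fls_X_intpow_powi:
  "(fls_X_intpow a :: 'a::field fls) powi m = fls_X_intpow (m * a)"
proof (cases "m \<ge> 0")
  case False
  have inv: "inverse (fls_X_intpow b :: 'a fls) = fls_X_intpow (- b)" for b
    by (rule inverse_unique) (use fls_X_intpow_times_fls_X_intpow[of b "-b"] in simp)
  show ?thesis using False fls_X_intpow_power[of "-a" "nat (-m)"]
    by (simp add: power_int_def inv)
qed (simp add: power_int_def fls_X_intpow_power)

lemma fls_compose_fps_sum:
  assumes "H \<noteq> 0" "fps_nth H 0 = 0"
  shows "fls_compose_fps (sum f S) H = (\<Sum>x\<in>S. fls_compose_fps (f x) H)"
  by (induction S rule: infinite_finite_induct) (auto simp: fls_compose_fps_add[OF assms])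

lemma embR_eq_sum:
  fixes a :: "'k::field fls"
  assumes R: "of_nat R \<noteq> (0::'k)" and q: "q > 0"
    and "finite S" "\<forall>m. m \<notin> S \<longrightarrow> fls_nth a m = 0"
  shows "embR q R a =
    (\<Sum>m\<in>S. fls_const (fls_nth a m) * (fls_X_intpow (int q * m) * fps_to_fls (hR R) powi m))"
proof -
  define g :: "'k fps" where "g = gR q R"
  have h0: "(hR R :: 'k fps) $ 0 = 1" using hR_spec[OF R] by simp
  have g: "g \<noteq> 0" "g $ 0 = 0"
    using h0 q unfolding g_def gR_def
    by (metis fps_nonzero_nth mult_eq_0_iff one_neq_zero power_eq_0_iff fps_X_neq_zero, simp)
  have gpow: "fps_to_fls g powi m = fls_X_intpow (int q * m) * fps_to_fls (hR R) powi m" for m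
  proof -
    have "fps_to_fls g = fls_X_intpow (int q) * fps_to_fls (hR R)"
      unfolding g_def gR_def
      by (simp add: fls_times_fps_to_fls fps_to_fls_power fls_X_power_conv_shift_1)
    then show ?thesis by (simp add: power_int_mult_distrib fls_X_intpow_powi mult.commute)
  qed
  have "embR q R a = fls_compose_fps (\<Sum>m\<in>S. fls_const (fls_nth a m) * fls_X_intpow m) g"
    unfolding embR_def g_def using fls_eq_sum_monomials[OF assms(3,4)] by simp
  also have "\<dots> = (\<Sum>m\<in>S. fls_compose_fps (fls_const (fls_nth a m) * fls_X_intpow m) g)"
    by (rule fls_compose_fps_sum[OF g])
  also have "\<dots> = (\<Sum>m\<in>S. fls_const (fls_nth a m) * fps_to_fls g powi m)"
    by (intro sum.cong refl) (simp add: fls_compose_fps_mult[OF g] fls_compose_fps_shift[OF g(1)])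
  finally show ?thesis by (simp add: gpow)
qed

lemma dvd_vanishes_below_embR_minus_iotaR_power:
  fixes a :: "'k::field fls"
  assumes pc: "prime CHAR('k)"
    and alg: "\<forall>f::'k poly. degree f > 0 \<longrightarrow> (\<exists>x. poly f x = 0)"
    and R: "coprime CHAR('k) R" and N: "N \<ge> 1"
    and neg: "\<forall>l::int. l \<ge> 0 \<longrightarrow> fls_nth a l = 0"
  shows "dvd_vanishes_below CHAR('k) (embR (CHAR('k) ^ N) R a - iotaR (CHAR('k) ^ N) a ^ (CHAR('k) ^ N))
           (ereal (real (CHAR('k) ^ N) * real_of_int (fls_subdegree a)) + ereal (real (CHAR('k) * R)))"
proof -
  define p q where "p = CHAR('k)" and "q = CHAR('k) ^ N"
  define S where "S = {fls_subdegree a..<0}"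
  have p: "p > 0" and q: "q > 0" unfolding p_def q_def using pc prime_gt_0_nat by auto
  have Rk: "of_nat R \<noteq> (0::'k)" and R0: "R > 0"
    using R pc by (auto simp: of_nat_eq_0_iff_char_dvd intro: Nat.gr0I)
  have supp: "finite S" "\<forall>m. m \<notin> S \<longrightarrow> fls_nth a m = 0"
    unfolding S_def using neg by (auto simp: not_le)
  have "embR q R a - iotaR q a ^ q = (\<Sum>m\<in>S. (fls_const (fls_nth a m) * fls_X_intpow (int q * m)) *
      (fps_to_fls (hR R) powi m - 1))"
    unfolding q_def embR_eq_sum[OF Rk q[unfolded q_def] supp] iotaR_power_eq_sum[OF pc alg supp]
    by (simp add: sum_subtractf[symmetric] algebra_simps)
  moreover have "dvd_vanishes_below p ((fls_const (fls_nth a m) * fls_X_intpow (int q * m)) *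
      (fps_to_fls (hR R) powi m - 1)) (ereal (real q * real_of_int (fls_subdegree a)) + ereal (real (p * R)))"
    if m: "m \<in> S" for m
  proof (cases "fls_nth a m = 0")
    case False
    have "int p dvd int q * m" unfolding p_def q_def using N by (simp add: dvd_power)
    then have "dvd_supported p (fls_const (fls_nth a m) * fls_X_intpow (int q * m))"
      by (auto simp: dvd_supported_def)
    moreover have "dvd_vanishes_below p (fps_to_fls (hR R :: 'k fps) powi m - 1) (ereal (real (p * R)))"
      using hR_spec[OF Rk] R[folded p_def] by (intro dvd_vanishes_below_powi_minus_1 R0 p) auto
    moreover have "fls_subdegree (fls_const (fls_nth a m) * fls_X_intpow (int q * m)) = int q * m"
      using False by (simp add: fls_const_nonzero)
    ultimately have "dvd_vanishes_below p ((fls_const (fls_nth a m) * fls_X_intpow (int q * m)) *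
        (fps_to_fls (hR R) powi m - 1)) (ereal (real_of_int (int q * m)) + ereal (real (p * R)))"
      by (metis dvd_vanishes_below_mult)
    moreover have "real q * real_of_int (fls_subdegree a) \<le> real_of_int (int q * m)"
      using m unfolding S_def by (simp add: mult_left_mono)
    ultimately show ?thesis by (elim dvd_vanishes_below_mono) simp
  qed simp
  ultimately show ?thesis unfolding p_def q_def by (simp add: dvd_vanishes_below_sum)
qed

section \<open>The bound for S_R\<close>

lemma fls_subdegree_neg:
  assumes "a \<noteq> 0" "\<forall>l::int. l \<ge> 0 \<longrightarrow> fls_nth a l = 0"
  shows "fls_subdegree a < 0"
  using assms nth_fls_subdegree_nonzero not_less by metis

lemma dvd_supported_iotaR_power:
  fixes a :: "'k::field fls"
  assumes pc: "prime CHAR('k)"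
    and alg: "\<forall>f::'k poly. degree f > 0 \<longrightarrow> (\<exists>x. poly f x = 0)"
    and neg: "\<forall>l::int. l \<ge> 0 \<longrightarrow> fls_nth a l = 0" and e: "e \<ge> 1"
  shows "dvd_supported CHAR('k) (iotaR (CHAR('k) ^ N) a ^ (CHAR('k) ^ e))"
proof -
  have "\<forall>m. m \<notin> {fls_subdegree a..<0} \<longrightarrow> fls_nth (iotaR (CHAR('k) ^ N) a) m = 0"
    using neg by (auto simp: iotaR_nth_eq_0_iff[OF pc alg] not_le)
  then show ?thesis by (rule dvd_supported_power_CHAR_power[OF pc finite_atLeastLessThan_int _ e])
qed

lemma fls_subdegree_iotaR_power_ge:
  fixes a :: "'k::field fls"
  assumes pc: "prime CHAR('k)"
    and alg: "\<forall>f::'k poly. degree f > 0 \<longrightarrow> (\<exists>x. poly f x = 0)"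
    and a: "a \<noteq> 0" and neg: "\<forall>l::int. l \<ge> 0 \<longrightarrow> fls_nth a l = 0" and e: "e \<le> N"
  shows "real (CHAR('k) ^ N) * real_of_int (fls_subdegree a)
    \<le> real_of_int (fls_subdegree (iotaR (CHAR('k) ^ N) a ^ (CHAR('k) ^ e)))"
proof -
  have "real (CHAR('k) ^ e) \<le> real (CHAR('k) ^ N)"
    using e pc prime_ge_1_nat by (simp only: of_nat_le_iff) (blast intro: power_increasing)
  then have "real (CHAR('k) ^ N) * real_of_int (fls_subdegree a)
      \<le> real (CHAR('k) ^ e) * real_of_int (fls_subdegree a)"
    using fls_subdegree_neg[OF a neg] by (intro mult_right_mono_neg) auto
  then show ?thesis by (simp add: fls_subdegree_pow fls_subdegree_iotaR[OF pc alg a])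
qed

lemma bounded_UT_frobm_iotaR:
  fixes A :: "'k::field fls mx"
  assumes pc: "prime CHAR('k)"
    and alg: "\<forall>f::'k poly. degree f > 0 \<longrightarrow> (\<exists>x. poly f x = 0)"
    and A_UT: "is_UT n A"
    and neg: "\<forall>a b. 1 \<le> a \<and> a < b \<and> b \<le> n \<longrightarrow> (\<forall>l::int. l \<ge> 0 \<longrightarrow> fls_nth (A a b) l = 0)"
    and e: "1 \<le> e" "e \<le> N"
  shows "bounded_UT n CHAR('k) (\<lambda>i j. - ereal (real (CHAR('k) ^ N)) * mu A i j)
           (frobm (CHAR('k) ^ e) (\<lambda>i j. iotaR (CHAR('k) ^ N) (A i j)))"
proof -
  let ?X = "frobm (CHAR('k) ^ e) (\<lambda>i j. iotaR (CHAR('k) ^ N) (A i j))"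
  have pe: "CHAR('k) ^ e > 0" using pc prime_gt_0_nat by simp
  then have z: "(0::'k fls) ^ (CHAR('k) ^ e) = 0" by (rule zero_power)
  have diag: "?X i j = idm i j" if "i \<in> {1..n}" "j \<in> {1..n}" "\<not> i < j" for i j
    using A_UT that unfolding is_UT_def frobm_def idm_def
    by (auto simp: iotaR_0[OF pc] iotaR_1[OF pc] z)
  have upper: "dvd_supported CHAR('k) (?X i j) \<and>
      vanishes_below (?X i j) (- ereal (real (CHAR('k) ^ N)) * mu A i j)"
    if ij: "1 \<le> i" "i < j" "j \<le> n" for i j
  proof (cases "A i j = 0")
    case True
    then show ?thesis by (simp add: frobm_def iotaR_0[OF pc] z)
  next
    case False
    have neg': "\<forall>l::int. l \<ge> 0 \<longrightarrow> fls_nth (A i j) l = 0" using neg ij by blast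
    have "- ereal (real (CHAR('k) ^ N)) * mu A i j
        \<le> ereal (real (CHAR('k) ^ N) * real_of_int (fls_subdegree (A i j)))"
      using ij False by (intro neg_scale_mu_le_subdegree) auto
    also have "\<dots> \<le> ereal (real_of_int (fls_subdegree (?X i j)))"
      unfolding frobm_def using fls_subdegree_iotaR_power_ge[OF pc alg False neg' e(2)] by simp
    finally show ?thesis
      using dvd_supported_iotaR_power[OF pc alg neg' e(1)] by (simp add: frobm_def vanishes_below_iff)
  qed
  show ?thesis
    unfolding bounded_UT_def is_UT_def
  proof (intro conjI ballI impI)
    fix i j assume i: "i \<in> {1..n}" and j: "j \<in> {1..n}"
    show "?X i j = 1" if "i = j" using diag[OF i j] that by (simp add: idm_def)
    show "?X i j = 0" if "j < i" using diag[OF i j] that by (simp add: idm_def)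
    have "dvd_supported CHAR('k) (?X i j) \<and>
        vanishes_below (?X i j) (- ereal (real (CHAR('k) ^ N)) * mu A i j)"
    proof (cases "i < j")
      case False
      then show ?thesis using diag[OF i j False] by (auto simp: idm_def intro: vanishes_below_1)
    qed (use upper i j in auto)
    then show "dvd_supported CHAR('k) (?X i j)"
      "vanishes_below (?X i j) (- ereal (real (CHAR('k) ^ N)) * mu A i j)" by auto
  qed
qed

lemma frobm_WR_Suc:
  fixes A :: "'k::field fls mx"
  assumes "prime CHAR('k)"
  shows "frobm CHAR('k) (WR CHAR('k) n q A (Suc e)) =
    mmul n (frobm (CHAR('k) ^ Suc e) (\<lambda>i j. iotaR q (A i j))) (frobm CHAR('k) (WR CHAR('k) n q A e))"
proof -
  have "frobm (CHAR('k) ^ 1) (mmul n X Y) = mmul n (frobm (CHAR('k) ^ 1) X) (frobm (CHAR('k) ^ 1) Y)"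
    for X Y :: "'k fls mx"
    by (rule frobm_mmul[OF assms])
  then show ?thesis by (simp add: WR_def frobm_frobm)
qed

lemma bounded_UT_frobm_WR:
  fixes A :: "'k::field fls mx"
  assumes pc: "prime CHAR('k)"
    and alg: "\<forall>f::'k poly. degree f > 0 \<longrightarrow> (\<exists>x. poly f x = 0)"
    and A_UT: "is_UT n A"
    and neg: "\<forall>a b. 1 \<le> a \<and> a < b \<and> b \<le> n \<longrightarrow> (\<forall>l::int. l \<ge> 0 \<longrightarrow> fls_nth (A a b) l = 0)"
    and "e \<le> N"
  shows "bounded_UT n CHAR('k) (\<lambda>i j. - ereal (real (CHAR('k) ^ N)) * mu A i j)
           (frobm CHAR('k) (WR CHAR('k) n (CHAR('k) ^ N) A e))"
proof -
  have c: "subadditive_bound n (\<lambda>i j. - ereal (real (CHAR('k) ^ N)) * mu A i j)"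
    using pc prime_gt_0_nat by (intro subadditive_bound_neg_scale_mu) simp
  show ?thesis
    using \<open>e \<le> N\<close>
  proof (induction e)
    case 0
    then show ?case using c pc prime_gt_0_nat by (simp add: WR_def frobm_idm bounded_UT_idm)
  next
    case (Suc e)
    then show ?case
      unfolding frobm_WR_Suc[OF pc]
      by (intro bounded_UT_mmul[OF c] bounded_UT_frobm_iotaR[OF pc alg A_UT neg]) auto
  qed
qed

text \<open>C is A_R^(p^N), except for N = 0: then the truncated N - 1 makes W_{N-1} = W_N, so C = I.\<close>

lemma dvd_vanishes_below_embR_minus_frobm:
  fixes A :: "'k::field fls mx"
  assumes pc: "prime CHAR('k)"
    and alg: "\<forall>f::'k poly. degree f > 0 \<longrightarrow> (\<exists>x. poly f x = 0)"
    and A_UT: "is_UT n A"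
    and neg: "\<forall>a b. 1 \<le> a \<and> a < b \<and> b \<le> n \<longrightarrow> (\<forall>l::int. l \<ge> 0 \<longrightarrow> fls_nth (A a b) l = 0)"
    and R: "coprime CHAR('k) R"
    and N: "\<And>k l. 1 \<le> k \<Longrightarrow> k < l \<Longrightarrow> l \<le> n \<Longrightarrow> A k l \<noteq> 0 \<Longrightarrow> N \<ge> 1"
    and kl: "k \<in> {1..n}" "l \<in> {1..n}"
  defines "C \<equiv> if N = 0 then idm else frobm (CHAR('k) ^ N) (\<lambda>i j. iotaR (CHAR('k) ^ N) (A i j))"
  shows "dvd_vanishes_below CHAR('k) (embR (CHAR('k) ^ N) R (A k l) - C k l)
      (- ereal (real (CHAR('k) ^ N)) * mu A k l + ereal (real (CHAR('k) * R)))"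
    and "l < k \<Longrightarrow> embR (CHAR('k) ^ N) R (A k l) - C k l = 0"
proof -
  have "CHAR('k) ^ N > 0" using pc prime_gt_0_nat by simp
  then have z: "(0::'k fls) ^ (CHAR('k) ^ N) = 0" by (rule zero_power)
  have zero: "embR (CHAR('k) ^ N) R (A k l) - C k l = 0" if "\<not> (k < l \<and> A k l \<noteq> 0)"
  proof (cases "k = l")
    case True
    then have "A k l = 1" using A_UT kl by (simp add: is_UT_def)
    then show ?thesis using True by (simp add: C_def frobm_def idm_def embR_def iotaR_1[OF pc])
  next
    case False
    then have "A k l = 0" using A_UT kl that by (auto simp: is_UT_def not_less)
    then show ?thesis using False by (simp add: C_def frobm_def idm_def embR_def iotaR_0[OF pc] z)
  qed
  then show "l < k \<Longrightarrow> embR (CHAR('k) ^ N) R (A k l) - C k l = 0" by simp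
  show "dvd_vanishes_below CHAR('k) (embR (CHAR('k) ^ N) R (A k l) - C k l)
      (- ereal (real (CHAR('k) ^ N)) * mu A k l + ereal (real (CHAR('k) * R)))"
  proof (cases "k < l \<and> A k l \<noteq> 0")
    case True
    then have N1: "N \<ge> 1" using N kl by auto
    have neg': "\<forall>l'::int. l' \<ge> 0 \<longrightarrow> fls_nth (A k l) l' = 0" using neg kl True by auto
    have "- ereal (real (CHAR('k) ^ N)) * mu A k l
        \<le> ereal (real (CHAR('k) ^ N) * real_of_int (fls_subdegree (A k l)))"
      using True by (intro neg_scale_mu_le_subdegree) auto
    then have "- ereal (real (CHAR('k) ^ N)) * mu A k l + ereal (real (CHAR('k) * R))
        \<le> ereal (real (CHAR('k) ^ N) * real_of_int (fls_subdegree (A k l))) + ereal (real (CHAR('k) * R))"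
      by (rule add_right_mono)
    moreover have "C k l = iotaR (CHAR('k) ^ N) (A k l) ^ (CHAR('k) ^ N)"
      using N1 by (simp add: C_def frobm_def)
    ultimately show ?thesis
      using dvd_vanishes_below_mono[OF dvd_vanishes_below_embR_minus_iotaR_power[OF pc alg R N1 neg']]
      by simp
  qed (simp add: zero)
qed

lemma dvd_vanishes_below_SR:
  fixes A :: "'k::field fls mx"
  assumes pc: "prime CHAR('k)"
    and alg: "\<forall>f::'k poly. degree f > 0 \<longrightarrow> (\<exists>x. poly f x = 0)"
    and A_UT: "is_UT n A"
    and neg: "\<forall>a b. 1 \<le> a \<and> a < b \<and> b \<le> n \<longrightarrow> (\<forall>l::int. l \<ge> 0 \<longrightarrow> fls_nth (A a b) l = 0)"
    and R: "coprime CHAR('k) R"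
    and N: "\<And>k l. 1 \<le> k \<Longrightarrow> k < l \<Longrightarrow> l \<le> n \<Longrightarrow> A k l \<noteq> 0 \<Longrightarrow> N \<ge> 1"
    and ij: "i \<in> {1..n}" "j \<in> {1..n}"
  shows "dvd_vanishes_below CHAR('k) (SR CHAR('k) n N R (CHAR('k) ^ N) A i j)
           (- ereal (real (CHAR('k) ^ N)) * mu A i j + ereal (real (CHAR('k) * R)))"
proof -
  define p where "p = CHAR('k)"
  define q where "q = p ^ N"
  define c where "c = (\<lambda>i j. - ereal (real q) * mu A i j)"
  define V M where "V = frobm p (WR p n q A (N - 1))" and "M = frobm p (WR p n q A N)"
  define C where "C = (if N = 0 then idm else frobm q (\<lambda>i j. iotaR q (A i j)))"
  have c: "subadditive_bound n c"
    unfolding c_def q_def p_def using pc prime_gt_0_nat by (intro subadditive_bound_neg_scale_mu) simp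
  have V: "bounded_UT n p c V" and M: "bounded_UT n p c M"
    unfolding V_def M_def c_def p_def q_def
    by (intro bounded_UT_frobm_WR[OF pc alg A_UT neg]; simp)+
  have MCV: "M a b = mmul n C V a b" if "a \<in> {1..n}" for a b
  proof (cases N)
    case 0
    then show ?thesis using that by (simp add: M_def V_def C_def mmul_idm_left)
  next
    case (Suc N')
    then show ?thesis by (simp add: M_def V_def C_def p_def q_def frobm_WR_Suc[OF pc])
  qed
  have "SR p n N R q A i j
      = mmul n (minv n M) (mmul n (\<lambda>i j. embR q R (A i j)) V) i j - idm i j"
    by (simp add: SR_def msub_def M_def V_def)
  also have "\<dots> = (\<Sum>k\<in>{1..n}. \<Sum>l\<in>{1..n}. minv n M i k * (embR q R (A k l) - C k l) * V l j)"
    using M MCV ij by (intro mmul_minv_sub_idm) (auto simp: bounded_UT_def)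
  finally have SR: "SR p n N R q A i j = \<dots>" .
  have "bounded_UT n p c (minv n M)"
    using M bounded_UT_ut_inv[OF c M] by (simp add: bounded_UT_def minv_eq_ut_inv)
  moreover have "dvd_vanishes_below p (embR q R (A k l) - C k l) (c k l + ereal (real (p * R)))"
    and "l < k \<Longrightarrow> embR q R (A k l) - C k l = 0"
    if "k \<in> {1..n}" "l \<in> {1..n}" for k l
    using dvd_vanishes_below_embR_minus_frobm[OF pc alg A_UT neg R N that]
    unfolding c_def C_def p_def q_def by simp_all
  ultimately have "dvd_vanishes_below p (SR p n N R q A i j) (c i j + ereal (real (p * R)))"
    unfolding SR by (intro dvd_vanishes_below_sandwich[OF c _ V _ _ ij])
  then show ?thesis by (simp add: c_def p_def q_def)
qed

lemma mA_pos:
  fixes A :: "'a::zero fls mx"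
  assumes ex: "1 \<le> a" "a < b" "b \<le> n" "A a b \<noteq> 0"
    and neg: "\<forall>a b. 1 \<le> a \<and> a < b \<and> b \<le> n \<longrightarrow> (\<forall>l::int. l \<ge> 0 \<longrightarrow> fls_nth (A a b) l = 0)"
  shows "mA n A > 0"
proof -
  define S where "S = {real_of_int (fls_subdegree (A i j)) / real (j - i) | i j.
                   1 \<le> i \<and> i < j \<and> j \<le> n \<and> A i j \<noteq> 0}"
  have "S \<subseteq> (\<lambda>(i,j). real_of_int (fls_subdegree (A i j)) / real (j - i)) ` ({1..n} \<times> {1..n})"
    unfolding S_def by auto
  then have "finite S" by (rule finite_subset) auto
  moreover have "S \<noteq> {}" unfolding S_def using ex by auto
  moreover have "\<forall>x\<in>S. x < 0"
    unfolding S_def using neg fls_subdegree_neg by (fastforce simp: divide_neg_pos)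
  ultimately have "Min S < 0" by simp
  then show ?thesis unfolding mA_def S_def by simp
qed

lemma one_le_of_gt_log:
  assumes "1 < b" "0 \<le> x" "0 \<le> y" "real N > log b (x + b) + y"
  shows "N \<ge> 1"
proof -
  have "0 \<le> log b (x + b)" using assms(1,2) by simp
  then show ?thesis using assms(3,4) by simp
qed

theorem lemma21:
  fixes p n N R i j :: nat and A :: "'k::field fls mx"
    and phi :: "'k fls \<Rightarrow> 'l::field" and Theta :: "'l mx"
  assumes p: "prime p" and chark: "of_nat p = (0::'k)"
    and algclosed: "\<forall>f::'k poly. degree f > 0 \<longrightarrow> (\<exists>x. poly f x = 0)"
    and n: "n \<ge> 2"
    and A_UT: "is_UT n A"
    and A_coef: "\<forall>a b. 1 \<le> a \<and> a < b \<and> b \<le> n \<longrightarrow>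
                   (\<forall>l::int. (int p dvd l \<or> l \<ge> 0) \<longrightarrow> fls_nth (A a b) l = 0)"
    and phi_hom: "is_field_hom phi"
    and L_gal: "galois_UT n p phi"
    and Theta_UT: "is_UT n Theta"
    and Theta_eq: "\<forall>a\<in>{1..n}. \<forall>b\<in>{1..n}.
                     mmul n (frobm p Theta) (\<lambda>c d. phi (A c d)) a b = Theta a b"
    and Theta_gen: "\<forall>F. is_subfield F \<and> range phi \<subseteq> F \<and>
                     (\<forall>a\<in>{1..n}. \<forall>b\<in>{1..n}. Theta a b \<in> F) \<longrightarrow> F = UNIV"
    and N: "real N > log (real p) (real n * (real p ^ (n * (n - 1) div 2) + 1) * mA n A + real p)
                      + real (n * (n - 1) div 2)"
    and R: "R > 0" "coprime R p"
    and ij: "1 \<le> i" "i < j" "j \<le> n"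
    and hyp: "vfl (SR p n N R (p ^ N) A i j) < - ereal (real (p ^ N)) * mu A i j + ereal (real (p * R))"
  shows "\<not> (int p dvd fls_subdegree (SR p n N R (p ^ N) A i j))"
proof -
  have pc: "CHAR('k) = p" by (rule CHAR_eq_prime[OF p chark])
  have neg: "\<forall>a b. 1 \<le> a \<and> a < b \<and> b \<le> n \<longrightarrow> (\<forall>l::int. l \<ge> 0 \<longrightarrow> fls_nth (A a b) l = 0)"
    using A_coef by blast
  have "N \<ge> 1" if "1 \<le> k" "k < l" "l \<le> n" "A k l \<noteq> 0" for k l
    using mA_pos[OF that neg] p prime_gt_1_nat by (intro one_le_of_gt_log[OF _ _ _ N]) auto
  then have "dvd_vanishes_below p (SR p n N R (p ^ N) A i j)
      (- ereal (real (p ^ N)) * mu A i j + ereal (real (p * R)))"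
    using dvd_vanishes_below_SR[OF _ algclosed A_UT neg, unfolded pc] p R(2) ij
    by (simp add: coprime_commute)
  then show ?thesis using hyp by (rule not_dvd_fls_subdegree)
qed

end
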